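(* In the MUPIR setting with $S = N+U-1$ sources and $K$ messages, for every integer $S \ge 1$ and every $\theta\in[K]$, the message $W_\theta$ can be retrieved while maintaining privacy from all $S$ sources, and the rate $R$ of such private retrieval satisfies $$R \le \Big(1 + \frac{1}{S} + \cdots + \frac{1}{S^{K-1}}\Big)^{-1}.$$
   Context: Setting (MUPIR): $N$ replicated, non-communicating databases each store the same $K$ independent messages $W_1,\dots,W_K$ of $L$ bits each ($H(W_k)=L$). A central user wishes to retrieve $W_\theta$ with help of $U-1$ other users; the $S=N+U-1$ sources are the $N$ databases and the $U-1$ other users. The central user sends a query $Q^{[\theta]}_s$ to each source $s\in[S]$ and receives an answer $A^{[\theta]}_s$ (queries to users are forwarded by them to a database and the answer is relayed back). Queries are independent of messages: $I(Q^{[k]}_{1:S};W_{1:K})=0$ for all $k$. Privacy: for every source $s$ and every $k\in[K]$, $(Q^{[1]}_s,A^{[1]}_s,W_{1:K})$ and $(Q^{[k]}_s,A^{[k]}_s,W_{1:K})$ are identically distributed. Correctness: $W_\theta$ is recoverable from all answers and queries. The rate is $R=L/D=H(W_\theta)/\big(S\,H(A^{[\theta]}_1\mid Q^{[\theta]}_{1:S})\big)$, with $D$ the total number of downloaded bits. *)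

theory Defs
  imports "HOL-Probability.Probability"
begin

definition H :: "'o::finite pmf \<Rightarrow> ('o \<Rightarrow> 'b) \<Rightarrow> real" where
  "H P X = prob_space.entropy (measure_pmf P) 2 (count_space (range X)) X"

definition Hc :: "'o::finite pmf \<Rightarrow> ('o \<Rightarrow> 'b) \<Rightarrow> ('o \<Rightarrow> 'c) \<Rightarrow> real" where
  "Hc P X Y = prob_space.conditional_entropy (measure_pmf P) 2
      (count_space (range X)) (count_space (range Y)) X Y"

definition MI :: "'o::finite pmf \<Rightarrow> ('o \<Rightarrow> 'b) \<Rightarrow> ('o \<Rightarrow> 'c) \<Rightarrow> real" where
  "MI P X Y = prob_space.mutual_information (measure_pmf P) 2
      (count_space (range X)) (count_space (range Y)) X Y"

text \<open>Messages are indexed by 0..<K (paper: 1..K), sources by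
  0..<S (paper: 1..S).  W k is the k-th message.\<close>

definition msgs :: "nat \<Rightarrow> (nat \<Rightarrow> 'o \<Rightarrow> bool list) \<Rightarrow> 'o \<Rightarrow> bool list list" where
  "msgs K W = (\<lambda>\<omega>. map (\<lambda>k. W k \<omega>) [0..<K])"

definition messages_ok :: "'o::finite pmf \<Rightarrow> nat \<Rightarrow> nat \<Rightarrow> (nat \<Rightarrow> 'o \<Rightarrow> bool list) \<Rightarrow> bool" where
  "messages_ok P K L W \<longleftrightarrow>
     (\<forall>k<K. \<forall>\<omega>. length (W k \<omega>) = L) \<and>
     prob_space.indep_vars (measure_pmf P) (\<lambda>_. count_space UNIV) W {..<K} \<and>
     (\<forall>k<K. H P (W k) = real L)"

text \<open>Q t s is the query sent to source s when the desired index is t;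
  ans s is the deterministic answer function of source s (a user forwards the
  query to a database and relays the answer, so the answer is a function of the
  query and the stored messages).\<close>

definition queries :: "nat \<Rightarrow> (nat \<Rightarrow> nat \<Rightarrow> 'o \<Rightarrow> 'q) \<Rightarrow> nat \<Rightarrow> 'o \<Rightarrow> 'q list" where
  "queries S Q t = (\<lambda>\<omega>. map (\<lambda>s. Q t s \<omega>) [0..<S])"

definition answer ::
  "nat \<Rightarrow> (nat \<Rightarrow> 'o \<Rightarrow> bool list) \<Rightarrow> (nat \<Rightarrow> nat \<Rightarrow> 'o \<Rightarrow> 'q)
     \<Rightarrow> (nat \<Rightarrow> 'q \<Rightarrow> bool list list \<Rightarrow> bool list) \<Rightarrow> nat \<Rightarrow> nat \<Rightarrow> 'o \<Rightarrow> bool list" where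
  "answer K W Q ans t s = (\<lambda>\<omega>. ans s (Q t s \<omega>) (msgs K W \<omega>))"

definition answers ::
  "nat \<Rightarrow> nat \<Rightarrow> (nat \<Rightarrow> 'o \<Rightarrow> bool list) \<Rightarrow> (nat \<Rightarrow> nat \<Rightarrow> 'o \<Rightarrow> 'q)
     \<Rightarrow> (nat \<Rightarrow> 'q \<Rightarrow> bool list list \<Rightarrow> bool list) \<Rightarrow> nat \<Rightarrow> 'o \<Rightarrow> bool list list" where
  "answers S K W Q ans t = (\<lambda>\<omega>. map (\<lambda>s. answer K W Q ans t s \<omega>) [0..<S])"

definition private_scheme ::
  "'o::finite pmf \<Rightarrow> nat \<Rightarrow> nat \<Rightarrow> (nat \<Rightarrow> 'o \<Rightarrow> bool list) \<Rightarrow> (nat \<Rightarrow> nat \<Rightarrow> 'o \<Rightarrow> 'q)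
     \<Rightarrow> (nat \<Rightarrow> 'q \<Rightarrow> bool list list \<Rightarrow> bool list)
     \<Rightarrow> (nat \<Rightarrow> 'q list \<Rightarrow> bool list list \<Rightarrow> bool list) \<Rightarrow> bool" where
  "private_scheme P S K W Q ans dec \<longleftrightarrow>
     (\<forall>t<K. MI P (queries S Q t) (msgs K W) = 0) \<and>
     (\<forall>s<S. \<forall>t<K.
        map_pmf (\<lambda>\<omega>. (Q 0 s \<omega>, answer K W Q ans 0 s \<omega>, msgs K W \<omega>)) P =
        map_pmf (\<lambda>\<omega>. (Q t s \<omega>, answer K W Q ans t s \<omega>, msgs K W \<omega>)) P) \<and>
     (\<forall>t<K. \<forall>\<omega>\<in>set_pmf P. dec t (queries S Q t \<omega>) (answers S K W Q ans t \<omega>) = W t \<omega>)"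

definition rate ::
  "'o::finite pmf \<Rightarrow> nat \<Rightarrow> nat \<Rightarrow> nat \<Rightarrow> (nat \<Rightarrow> 'o \<Rightarrow> bool list) \<Rightarrow> (nat \<Rightarrow> nat \<Rightarrow> 'o \<Rightarrow> 'q)
     \<Rightarrow> (nat \<Rightarrow> 'q \<Rightarrow> bool list list \<Rightarrow> bool list) \<Rightarrow> nat \<Rightarrow> real" where
  "rate P S K L W Q ans t =
     real L / (\<Sum>s<S. Hc P (answer K W Q ans t s) (queries S Q t))"

end

theory Submission
  imports Defs
begin

text \<open>
  Write D(k, T) = H(A_k | W_T, Q_k) for the entropy of all answers for desired index k given the
  queries and the messages indexed by T.  Correctness lets the answers recover W_k, and W_k is
  independent of the remaining messages and of the queries, so D(k, T) \<ge> L + D(k, T \<union> {k}).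
  Each single answer depends only on its own query and on the messages, which are independent of
  the queries; by privacy its conditional entropy is the same for every desired index.  Summing
  over the S sources gives D(k', T') \<le> S \<cdot> D(k, T') for every k'.  Iterating over the K messages
  yields D(\<theta>, {}) \<ge> L (1 + 1/S + \<dots> + 1/S^(K-1)), and D(\<theta>, {}) is at most the total download.
  Achievability is trivial: every source returns all messages.
\<close>

section \<open>Entropy of random variables on a finite probability space\<close>

text \<open>Only on the support of P: decoding is required to be correct only there.\<close>

definition determines :: "'o pmf \<Rightarrow> ('o \<Rightarrow> 'a) \<Rightarrow> ('o \<Rightarrow> 'b) \<Rightarrow> bool" where
  "determines P X Y \<longleftrightarrow> (\<forall>\<omega>\<in>set_pmf P. \<forall>\<omega>'\<in>set_pmf P. X \<omega> = X \<omega>' \<longrightarrow> Y \<omega> = Y \<omega>')"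

context
  fixes P :: "'o::finite pmf"
begin

interpretation information_space "measure_pmf P" 2
  by unfold_locales simp

lemma simple_function_measure_pmf: "simple_function (measure_pmf P) X"
  by (simp add: simple_function_def)

lemma simple_distributed_pmf_map:
  "simple_distributed (measure_pmf P) X (pmf (map_pmf X P))"
  by (rule measure_pmf.simple_distributedI[OF simple_function_measure_pmf])
     (auto simp: pmf_map)

lemma pmf_map_pos: "\<omega> \<in> set_pmf P \<Longrightarrow> 0 < pmf (map_pmf X P) (X \<omega>)"
  by (simp add: pmf_positive)

lemma sum_range_pmf_map:
  "(\<Sum>x\<in>range X. pmf (map_pmf X P) x * g x) = (\<Sum>\<omega>\<in>UNIV. pmf P \<omega> * g (X \<omega>))"
proof -
  have "(\<Sum>x\<in>range X. pmf (map_pmf X P) x * g x) =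
      (\<Sum>x\<in>range X. \<Sum>\<omega>\<in>{\<omega>\<in>UNIV. X \<omega> = x}. pmf P \<omega> * g (X \<omega>))"
    by (intro sum.cong refl)
       (auto simp: pmf_map measure_measure_pmf_finite sum_distrib_right vimage_def intro!: sum.cong)
  also have "\<dots> = (\<Sum>\<omega>\<in>UNIV. pmf P \<omega> * g (X \<omega>))"
    by (rule sum.group) auto
  finally show ?thesis .
qed

lemma H_eq_sum: "H P X = - (\<Sum>\<omega>\<in>UNIV. pmf P \<omega> * log 2 (pmf (map_pmf X P) (X \<omega>)))"
  unfolding H_def
  using entropy_simple_distributed[OF simple_distributed_pmf_map, of X]
  by (simp add: sum_range_pmf_map)

lemma H_map_pmf_cong:
  assumes "map_pmf X P = map_pmf Y P"
  shows "H P X = H P Y"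
proof -
  have "H P X = - measure_pmf.expectation (map_pmf X P) (\<lambda>x. log 2 (pmf (map_pmf X P) x))"
    for X :: "'o \<Rightarrow> 'a"
    unfolding H_eq_sum integral_map_pmf
    by (subst integral_measure_pmf_real[where A=UNIV]) (auto simp: mult.commute)
  then show ?thesis
    using assms by metis
qed

lemma H_eq_if_determines:
  assumes "determines P X Y" and "determines P Y X"
  shows "H P X = H P Y"
proof -
  have "pmf (map_pmf X P) (X \<omega>) = pmf (map_pmf Y P) (Y \<omega>)" if "\<omega> \<in> set_pmf P" for \<omega>
  proof -
    have "X \<omega>' = X \<omega> \<longleftrightarrow> Y \<omega>' = Y \<omega>" if "\<omega>' \<in> set_pmf P" for \<omega>'
      using assms \<open>\<omega> \<in> set_pmf P\<close> that unfolding determines_def by blast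
    then have "X -` {X \<omega>} \<inter> set_pmf P = Y -` {Y \<omega>} \<inter> set_pmf P"
      by auto
    then show ?thesis
      by (metis pmf_map measure_Int_set_pmf)
  qed
  then have "pmf P \<omega> * log 2 (pmf (map_pmf X P) (X \<omega>)) = pmf P \<omega> * log 2 (pmf (map_pmf Y P) (Y \<omega>))"
    for \<omega>
    by (cases "\<omega> \<in> set_pmf P") (auto simp: set_pmf_iff)
  then show ?thesis
    unfolding H_eq_sum by (simp only:)
qed

lemma H_pair_eq_if_determines:
  assumes "determines P X Y"
  shows "H P (\<lambda>\<omega>. (X \<omega>, Y \<omega>)) = H P X"
proof (rule H_eq_if_determines)
  show "determines P (\<lambda>\<omega>. (X \<omega>, Y \<omega>)) X"
    unfolding determines_def by simp
  show "determines P X (\<lambda>\<omega>. (X \<omega>, Y \<omega>))"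
    using assms unfolding determines_def by blast
qed

lemma H_const: "H P (\<lambda>_. c) = 0"
  by (simp add: H_eq_sum)

lemma H_le_if_determines:
  assumes "determines P X Y"
  shows "H P Y \<le> H P X"
proof -
  have "H P Y \<le> H P (\<lambda>\<omega>. (X \<omega>, Y \<omega>))"
    using entropy_data_processing[OF simple_function_measure_pmf[of "\<lambda>\<omega>. (X \<omega>, Y \<omega>)"], where f=snd]
    by (simp add: H_def comp_def)
  then show ?thesis
    using H_pair_eq_if_determines[OF assms] by (simp add: comp_def)
qed

lemma Hc_eq: "Hc P X Z = H P (\<lambda>\<omega>. (X \<omega>, Z \<omega>)) - H P Z"
proof -
  have "H P (\<lambda>\<omega>. (Z \<omega>, X \<omega>)) = H P Z + Hc P X Z"
    unfolding H_def Hc_def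
    using entropy_chain_rule[OF simple_function_measure_pmf simple_function_measure_pmf] by simp
  moreover have "H P (\<lambda>\<omega>. (Z \<omega>, X \<omega>)) = H P (\<lambda>\<omega>. (X \<omega>, Z \<omega>))"
    by (intro H_eq_if_determines) (auto simp: determines_def)
  ultimately show ?thesis by simp
qed

lemma Hc_nonneg: "0 \<le> Hc P X Z"
  unfolding Hc_def
  using conditional_entropy_nonneg[OF simple_function_measure_pmf simple_function_measure_pmf] by simp

lemma MI_eq: "MI P X Y = H P X + H P Y - H P (\<lambda>\<omega>. (X \<omega>, Y \<omega>))"
proof -
  have "MI P X Y = H P X - Hc P X Y"
    using mutual_information_eq_entropy_conditional_entropy[OF simple_function_measure_pmf simple_function_measure_pmf]
    by (simp add: MI_def H_def Hc_def)
  then show ?thesis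
    by (simp add: Hc_eq)
qed

lemma MI_nonneg: "0 \<le> MI P X Y"
  unfolding MI_def
  using mutual_information_nonneg_simple[OF simple_function_measure_pmf simple_function_measure_pmf] by simp

lemma H_submodular:
  "H P (\<lambda>\<omega>. (X \<omega>, Y \<omega>, Z \<omega>)) + H P Z \<le> H P (\<lambda>\<omega>. (X \<omega>, Z \<omega>)) + H P (\<lambda>\<omega>. (Y \<omega>, Z \<omega>))"
proof -
  let ?XYZ = "\<lambda>\<omega>. (X \<omega>, Y \<omega>, Z \<omega>)" and ?XZ = "\<lambda>\<omega>. (X \<omega>, Z \<omega>)" and ?YZ = "\<lambda>\<omega>. (Y \<omega>, Z \<omega>)"
  let ?p = "\<lambda>V :: 'o \<Rightarrow> _. \<lambda>\<omega>. pmf (map_pmf V P) (V \<omega>)"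
  have "0 \<le> (\<Sum>t\<in>range ?XYZ. pmf (map_pmf ?XYZ P) t * log 2 (pmf (map_pmf ?XYZ P) t /
      (pmf (map_pmf ?XZ P) (fst t, snd (snd t)) *
       (pmf (map_pmf ?YZ P) (snd t) / pmf (map_pmf Z P) (snd (snd t))))))"
    using conditional_mutual_information_nonneg[OF simple_function_measure_pmf
        simple_function_measure_pmf simple_function_measure_pmf, of X Y Z]
      conditional_mutual_information_eq[OF simple_distributed_pmf_map[of Z]
        simple_distributed_pmf_map[of ?YZ] simple_distributed_pmf_map[of ?XZ]
        simple_distributed_pmf_map[of ?XYZ]]
    by (simp add: case_prod_beta')
  also have "\<dots> = (\<Sum>\<omega>\<in>UNIV. pmf P \<omega> * log 2 (?p ?XYZ \<omega> / (?p ?XZ \<omega> * (?p ?YZ \<omega> / ?p Z \<omega>))))"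
    by (subst sum_range_pmf_map) simp
  also have "\<dots> = (\<Sum>\<omega>\<in>UNIV. pmf P \<omega> * (log 2 (?p ?XYZ \<omega>) - log 2 (?p ?XZ \<omega>)
      - log 2 (?p ?YZ \<omega>) + log 2 (?p Z \<omega>)))"
  proof (intro sum.cong refl)
    fix \<omega>
    show "pmf P \<omega> * log 2 (?p ?XYZ \<omega> / (?p ?XZ \<omega> * (?p ?YZ \<omega> / ?p Z \<omega>))) =
        pmf P \<omega> * (log 2 (?p ?XYZ \<omega>) - log 2 (?p ?XZ \<omega>) - log 2 (?p ?YZ \<omega>) + log 2 (?p Z \<omega>))"
      using pmf_map_pos[of \<omega> ?XYZ] pmf_map_pos[of \<omega> ?XZ] pmf_map_pos[of \<omega> ?YZ] pmf_map_pos[of \<omega> Z]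
      by (cases "\<omega> \<in> set_pmf P") (auto simp: set_pmf_iff log_divide log_mult)
  qed
  also have "\<dots> = H P ?XZ + H P ?YZ - H P ?XYZ - H P Z"
    unfolding H_eq_sum by (simp add: algebra_simps sum.distrib sum_subtractf)
  finally show ?thesis by simp
qed

end

lemma H_pair_commute: "H P (\<lambda>\<omega>. (X \<omega>, Y \<omega>)) = H P (\<lambda>\<omega>. (Y \<omega>, X \<omega>))"
  by (rule H_eq_if_determines) (auto simp: determines_def)

lemma H_pair_le_add: "H P (\<lambda>\<omega>. (X \<omega>, Y \<omega>)) \<le> H P X + H P Y"
proof -
  have "H P (\<lambda>\<omega>. (X \<omega>, Y \<omega>, ())) + H P (\<lambda>_. ()) \<le> H P (\<lambda>\<omega>. (X \<omega>, ())) + H P (\<lambda>\<omega>. (Y \<omega>, ()))"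
    by (rule H_submodular)
  moreover have "H P (\<lambda>\<omega>. (X \<omega>, Y \<omega>, ())) = H P (\<lambda>\<omega>. (X \<omega>, Y \<omega>))"
    by (rule H_eq_if_determines) (auto simp: determines_def)
  ultimately show ?thesis
    by (simp add: H_const H_pair_eq_if_determines determines_def)
qed

lemma MI_commute: "MI P X Y = MI P Y X"
  using H_pair_commute[of P X Y] by (simp add: MI_eq)

lemma MI_le_if_determines:
  assumes "determines P X X'"
  shows "MI P X' Y \<le> MI P X Y"
proof -
  have "H P (\<lambda>\<omega>. (X \<omega>, Y \<omega>, X' \<omega>)) + H P X' \<le> H P (\<lambda>\<omega>. (X \<omega>, X' \<omega>)) + H P (\<lambda>\<omega>. (Y \<omega>, X' \<omega>))"
    by (rule H_submodular)
  moreover have "H P (\<lambda>\<omega>. (X \<omega>, Y \<omega>, X' \<omega>)) = H P (\<lambda>\<omega>. (X \<omega>, Y \<omega>))"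
  proof (rule H_eq_if_determines)
    show "determines P (\<lambda>\<omega>. (X \<omega>, Y \<omega>)) (\<lambda>\<omega>. (X \<omega>, Y \<omega>, X' \<omega>))"
      using assms unfolding determines_def by blast
  qed (auto simp: determines_def)
  moreover have "H P (\<lambda>\<omega>. (X \<omega>, X' \<omega>)) = H P X"
    using assms by (rule H_pair_eq_if_determines)
  ultimately show ?thesis
    using H_pair_commute[of P Y X'] by (simp add: MI_eq)
qed

lemma MI_eq_0_if_determines:
  assumes "MI P X Y = 0" and "determines P X X'" and "determines P Y Y'"
  shows "MI P X' Y' = 0"
proof -
  have "MI P Y' X' \<le> MI P Y X'"
    using assms(3) by (rule MI_le_if_determines)
  also have "\<dots> = MI P X' Y"
    by (rule MI_commute)
  also have "\<dots> \<le> MI P X Y"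
    using assms(2) by (rule MI_le_if_determines)
  finally show ?thesis
    using assms(1) MI_nonneg[of P X' Y'] MI_commute[of P X' Y'] by linarith
qed

lemma MI_const: "MI P (\<lambda>_. c) Y = 0"
proof -
  have "H P (\<lambda>\<omega>. (c, Y \<omega>)) = H P Y"
    by (rule H_eq_if_determines) (auto simp: determines_def)
  then show ?thesis
    by (simp add: MI_eq H_const)
qed

lemma Hc_cond_cong:
  assumes "determines P Z Z'" and "determines P Z' Z"
  shows "Hc P X Z = Hc P X Z'"
proof -
  have "H P (\<lambda>\<omega>. (X \<omega>, Z \<omega>)) = H P (\<lambda>\<omega>. (X \<omega>, Z' \<omega>))"
  proof (rule H_eq_if_determines)
    show "determines P (\<lambda>\<omega>. (X \<omega>, Z \<omega>)) (\<lambda>\<omega>. (X \<omega>, Z' \<omega>))"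
      using assms(1) unfolding determines_def by blast
    show "determines P (\<lambda>\<omega>. (X \<omega>, Z' \<omega>)) (\<lambda>\<omega>. (X \<omega>, Z \<omega>))"
      using assms(2) unfolding determines_def by blast
  qed
  then show ?thesis
    using H_eq_if_determines[OF assms] by (simp add: Hc_eq)
qed

lemma Hc_le_if_determines:
  assumes "determines P X Y"
  shows "Hc P Y Z \<le> Hc P X Z"
proof -
  have "H P (\<lambda>\<omega>. (Y \<omega>, Z \<omega>)) \<le> H P (\<lambda>\<omega>. (X \<omega>, Z \<omega>))"
  proof (rule H_le_if_determines)
    show "determines P (\<lambda>\<omega>. (X \<omega>, Z \<omega>)) (\<lambda>\<omega>. (Y \<omega>, Z \<omega>))"
      using assms unfolding determines_def by blast
  qed
  then show ?thesis
    by (simp add: Hc_eq)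
qed

lemma Hc_cond_antimono:
  assumes "determines P Z' Z"
  shows "Hc P X Z' \<le> Hc P X Z"
proof -
  have "H P (\<lambda>\<omega>. (X \<omega>, Z' \<omega>, Z \<omega>)) + H P Z \<le> H P (\<lambda>\<omega>. (X \<omega>, Z \<omega>)) + H P (\<lambda>\<omega>. (Z' \<omega>, Z \<omega>))"
    by (rule H_submodular)
  moreover have "H P (\<lambda>\<omega>. (X \<omega>, Z' \<omega>, Z \<omega>)) = H P (\<lambda>\<omega>. (X \<omega>, Z' \<omega>))"
  proof (rule H_eq_if_determines)
    show "determines P (\<lambda>\<omega>. (X \<omega>, Z' \<omega>)) (\<lambda>\<omega>. (X \<omega>, Z' \<omega>, Z \<omega>))"
      using assms unfolding determines_def by blast
  qed (auto simp: determines_def)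
  moreover have "H P (\<lambda>\<omega>. (Z' \<omega>, Z \<omega>)) = H P Z'"
    using assms by (rule H_pair_eq_if_determines)
  ultimately show ?thesis
    by (simp add: Hc_eq)
qed

lemma Hc_chain_determined:
  assumes "determines P (\<lambda>\<omega>. (A \<omega>, Z \<omega>)) Y"
  shows "Hc P A Z = Hc P Y Z + Hc P A (\<lambda>\<omega>. (Y \<omega>, Z \<omega>))"
proof -
  have "H P (\<lambda>\<omega>. (A \<omega>, Z \<omega>)) = H P (\<lambda>\<omega>. (A \<omega>, Y \<omega>, Z \<omega>))"
  proof (rule H_eq_if_determines)
    show "determines P (\<lambda>\<omega>. (A \<omega>, Z \<omega>)) (\<lambda>\<omega>. (A \<omega>, Y \<omega>, Z \<omega>))"
      using assms unfolding determines_def by blast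
  qed (auto simp: determines_def)
  then show ?thesis
    by (simp add: Hc_eq)
qed

lemma Hc_list_le_sum:
  "Hc P (\<lambda>\<omega>. map (\<lambda>s. X s \<omega>) [0..<n]) Z \<le> (\<Sum>s<n. Hc P (X s) Z)"
proof (induction n)
  case 0
  have "H P (\<lambda>\<omega>. (map (\<lambda>s. X s \<omega>) [0..<0], Z \<omega>)) = H P Z"
    by (rule H_eq_if_determines) (auto simp: determines_def)
  then show ?case
    by (simp add: Hc_eq)
next
  case (Suc n)
  let ?M = "\<lambda>\<omega>. map (\<lambda>s. X s \<omega>) [0..<n]"
  have "H P (\<lambda>\<omega>. (?M \<omega>, X n \<omega>, Z \<omega>)) + H P Z \<le> H P (\<lambda>\<omega>. (?M \<omega>, Z \<omega>)) + H P (\<lambda>\<omega>. (X n \<omega>, Z \<omega>))"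
    by (rule H_submodular)
  moreover have "H P (\<lambda>\<omega>. (map (\<lambda>s. X s \<omega>) [0..<Suc n], Z \<omega>)) = H P (\<lambda>\<omega>. (?M \<omega>, X n \<omega>, Z \<omega>))"
    by (rule H_eq_if_determines) (auto simp: determines_def)
  ultimately show ?case
    using Suc.IH by (simp add: Hc_eq)
qed

lemma Hc_map_pmf_cong:
  assumes "map_pmf V P = map_pmf V' P"
  shows "Hc P (\<lambda>\<omega>. f (V \<omega>)) (\<lambda>\<omega>. g (V \<omega>)) = Hc P (\<lambda>\<omega>. f (V' \<omega>)) (\<lambda>\<omega>. g (V' \<omega>))"
proof -
  have eq: "map_pmf (\<lambda>\<omega>. h (V \<omega>)) P = map_pmf (\<lambda>\<omega>. h (V' \<omega>)) P" for h
  proof -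
    have "map_pmf (\<lambda>\<omega>. h (V \<omega>)) P = map_pmf h (map_pmf V P)"
      by (simp add: map_pmf_comp)
    also have "\<dots> = map_pmf (\<lambda>\<omega>. h (V' \<omega>)) P"
      by (simp add: assms map_pmf_comp)
    finally show ?thesis .
  qed
  show ?thesis
    unfolding Hc_eq
    using H_map_pmf_cong[OF eq[of "\<lambda>v. (f v, g v)"]] H_map_pmf_cong[OF eq[of g]] by simp
qed

lemma Hc_le_Hc_independent_refinement:
  assumes indep: "MI P M Q = 0"
    and M_X: "determines P M X" and Q_q: "determines P Q q"
    and Mq_A: "determines P (\<lambda>\<omega>. (M \<omega>, q \<omega>)) A"
  shows "Hc P A (\<lambda>\<omega>. (X \<omega>, q \<omega>)) \<le> Hc P A (\<lambda>\<omega>. (X \<omega>, Q \<omega>))"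
proof -
  let ?Z = "\<lambda>\<omega>. (A \<omega>, X \<omega>, q \<omega>)"
  have "H P (\<lambda>\<omega>. (M \<omega>, Q \<omega>, ?Z \<omega>)) + H P ?Z \<le> H P (\<lambda>\<omega>. (M \<omega>, ?Z \<omega>)) + H P (\<lambda>\<omega>. (Q \<omega>, ?Z \<omega>))"
    by (rule H_submodular)
  moreover have "H P (\<lambda>\<omega>. (M \<omega>, Q \<omega>, ?Z \<omega>)) = H P (\<lambda>\<omega>. (M \<omega>, Q \<omega>))"
  proof (rule H_eq_if_determines)
    show "determines P (\<lambda>\<omega>. (M \<omega>, Q \<omega>)) (\<lambda>\<omega>. (M \<omega>, Q \<omega>, ?Z \<omega>))"
      using M_X Q_q Mq_A unfolding determines_def by blast
  qed (auto simp: determines_def)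
  moreover have "H P (\<lambda>\<omega>. (M \<omega>, ?Z \<omega>)) = H P (\<lambda>\<omega>. (M \<omega>, q \<omega>))"
  proof (rule H_eq_if_determines)
    show "determines P (\<lambda>\<omega>. (M \<omega>, q \<omega>)) (\<lambda>\<omega>. (M \<omega>, ?Z \<omega>))"
      using M_X Mq_A unfolding determines_def by blast
  qed (auto simp: determines_def)
  moreover have "H P (\<lambda>\<omega>. (Q \<omega>, ?Z \<omega>)) = H P (\<lambda>\<omega>. (A \<omega>, X \<omega>, Q \<omega>))"
  proof (rule H_eq_if_determines)
    show "determines P (\<lambda>\<omega>. (A \<omega>, X \<omega>, Q \<omega>)) (\<lambda>\<omega>. (Q \<omega>, ?Z \<omega>))"
      using Q_q unfolding determines_def by blast
  qed (auto simp: determines_def)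
  moreover have "MI P X q = 0"
    using indep M_X Q_q by (rule MI_eq_0_if_determines)
  moreover note H_pair_le_add[of P M q] H_pair_le_add[of P X Q] indep
  ultimately show ?thesis
    by (simp add: Hc_eq MI_eq)
qed

lemma MI_eq_0_if_pmf_factor:
  assumes "\<And>\<omega>. \<omega> \<in> set_pmf P \<Longrightarrow>
    pmf (map_pmf (\<lambda>\<omega>. (X \<omega>, Y \<omega>)) P) (X \<omega>, Y \<omega>) = pmf (map_pmf X P) (X \<omega>) * pmf (map_pmf Y P) (Y \<omega>)"
  shows "MI P X Y = 0"
proof -
  have "pmf P \<omega> * log 2 (pmf (map_pmf (\<lambda>\<omega>. (X \<omega>, Y \<omega>)) P) (X \<omega>, Y \<omega>)) =
      pmf P \<omega> * log 2 (pmf (map_pmf X P) (X \<omega>)) + pmf P \<omega> * log 2 (pmf (map_pmf Y P) (Y \<omega>))" for \<omega>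
    using assms[of \<omega>] pmf_map_pos[of \<omega> P X] pmf_map_pos[of \<omega> P Y]
    by (cases "\<omega> \<in> set_pmf P") (auto simp: set_pmf_iff log_mult distrib_left)
  then show ?thesis
    by (simp add: MI_eq H_eq_sum sum.distrib)
qed

lemma singleton_restrict_in_sets_PiM:
  assumes "finite A"
  shows "{restrict f A} \<in> sets (PiM A (\<lambda>_. count_space UNIV))"
proof -
  have "(\<Pi>\<^sub>E i\<in>A. {restrict f A i}) = (\<Pi>\<^sub>E i\<in>A. {f i})"
    by (rule PiE_cong) simp
  then have "{restrict f A} = (\<Pi>\<^sub>E i\<in>A. {f i})"
    using PiE_singleton[of "restrict f A" A] by simp
  then show ?thesis
    using sets_PiM_I_finite[OF assms, of "\<lambda>i. {f i}" "\<lambda>_. count_space UNIV"] by simp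
qed

lemma MI_restrict_eq_0_if_indep_vars:
  assumes indep: "prob_space.indep_vars (measure_pmf P) (\<lambda>_. count_space UNIV) X I"
    and "A \<inter> B = {}" "A \<subseteq> I" "B \<subseteq> I" "finite A" "finite B"
  shows "MI P (\<lambda>\<omega>. restrict (\<lambda>i. X i \<omega>) A) (\<lambda>\<omega>. restrict (\<lambda>i. X i \<omega>) B) = 0"
proof (rule MI_eq_0_if_pmf_factor)
  fix \<omega>
  let ?XA = "\<lambda>\<omega>. restrict (\<lambda>i. X i \<omega>) A" and ?XB = "\<lambda>\<omega>. restrict (\<lambda>i. X i \<omega>) B"
  have "prob_space.indep_var (measure_pmf P) (PiM A (\<lambda>_. count_space UNIV)) ?XA
      (PiM B (\<lambda>_. count_space UNIV)) ?XB"
    using assms by (intro prob_space.indep_var_restrict[OF prob_space_measure_pmf indep])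
  then have "measure_pmf.prob P ((\<lambda>\<omega>. (?XA \<omega>, ?XB \<omega>)) -` ({?XA \<omega>} \<times> {?XB \<omega>})) =
      measure_pmf.prob P (?XA -` {?XA \<omega>}) * measure_pmf.prob P (?XB -` {?XB \<omega>})"
    using prob_space.indep_varD[OF prob_space_measure_pmf _
        singleton_restrict_in_sets_PiM[OF assms(5)] singleton_restrict_in_sets_PiM[OF assms(6)]]
    by simp
  then show "pmf (map_pmf (\<lambda>\<omega>. (?XA \<omega>, ?XB \<omega>)) P) (?XA \<omega>, ?XB \<omega>) =
      pmf (map_pmf ?XA P) (?XA \<omega>) * pmf (map_pmf ?XB P) (?XB \<omega>)"
    by (simp add: pmf_map)
qed

lemma restrict_eq_restrict_iff: "restrict f A = restrict g A \<longleftrightarrow> (\<forall>x\<in>A. f x = g x)"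
  by (metis restrict_apply' restrict_ext)

lemma msgs_eq_iff: "msgs K W \<omega> = msgs K W \<omega>' \<longleftrightarrow> (\<forall>j<K. W j \<omega> = W j \<omega>')"
  unfolding msgs_def by (auto simp: map_eq_conv)

section \<open>The converse bound\<close>

abbreviation msgs_on :: "(nat \<Rightarrow> 'o \<Rightarrow> 'a) \<Rightarrow> nat set \<Rightarrow> 'o \<Rightarrow> nat \<Rightarrow> 'a" where
  "msgs_on W T \<equiv> \<lambda>\<omega>. restrict (\<lambda>j. W j \<omega>) T"

context
  fixes P :: "'o::finite pmf" and S K L :: nat and W :: "nat \<Rightarrow> 'o \<Rightarrow> bool list"
    and Q :: "nat \<Rightarrow> nat \<Rightarrow> 'o \<Rightarrow> 'q" and ans :: "nat \<Rightarrow> 'q \<Rightarrow> bool list list \<Rightarrow> bool list"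
    and dec :: "nat \<Rightarrow> 'q list \<Rightarrow> bool list list \<Rightarrow> bool list"
  assumes messages: "messages_ok P K L W"
    and scheme: "private_scheme P S K W Q ans dec"
begin

abbreviation "Queries \<equiv> queries S Q"
abbreviation "Ans \<equiv> answer K W Q ans"
abbreviation "Answers \<equiv> answers S K W Q ans"

lemma determines_msgs_on: "T \<subseteq> {..<K} \<Longrightarrow> determines P (msgs K W) (msgs_on W T)"
  unfolding determines_def msgs_def by (auto simp: map_eq_conv subset_iff intro!: restrict_ext)

lemma determines_query: "s < S \<Longrightarrow> determines P (Queries t) (Q t s)"
  unfolding determines_def queries_def by (auto simp: map_eq_conv)

lemma determines_answer: "s < S \<Longrightarrow> determines P (Answers t) (Ans t s)"
  unfolding determines_def answers_def by (auto simp: map_eq_conv)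

lemma determines_answer_msgs_query: "determines P (\<lambda>\<omega>. (msgs K W \<omega>, Q t s \<omega>)) (Ans t s)"
  unfolding determines_def answer_def by auto

lemma MI_msgs_queries: "t < K \<Longrightarrow> MI P (msgs K W) (Queries t) = 0"
  using scheme MI_commute[of P "msgs K W" "Queries t"] unfolding private_scheme_def by simp

lemma H_msgs_split:
  assumes k: "k < K"
  shows "H P (msgs K W) = real L + H P (msgs_on W ({..<K} - {k}))"
proof -
  let ?B = "{..<K} - {k}"
  have indep: "prob_space.indep_vars (measure_pmf P) (\<lambda>_. count_space UNIV) W {..<K}"
    and H_k: "H P (W k) = real L"
    using messages k unfolding messages_ok_def by auto
  have "MI P (msgs_on W {k}) (msgs_on W ?B) = 0"
    using k by (intro MI_restrict_eq_0_if_indep_vars[OF indep]) auto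
  moreover have "H P (msgs_on W {k}) = H P (W k)"
    by (rule H_eq_if_determines) (auto simp: determines_def restrict_eq_restrict_iff)
  moreover have "H P (msgs K W) = H P (\<lambda>\<omega>. (msgs_on W {k} \<omega>, msgs_on W ?B \<omega>))"
    using k by (intro H_eq_if_determines) (auto simp: determines_def restrict_eq_restrict_iff msgs_eq_iff)
  ultimately show ?thesis
    using H_k by (simp add: MI_eq)
qed

lemma L_le_Hc_message:
  assumes T: "T \<subseteq> {..<K}" and k: "k < K" "k \<notin> T" and t: "t < K"
  shows "real L \<le> Hc P (W k) (\<lambda>\<omega>. (msgs_on W T \<omega>, Queries t \<omega>))"
proof -
  let ?B = "{..<K} - {k}"
  have "Hc P (W k) (\<lambda>\<omega>. (msgs_on W ?B \<omega>, Queries t \<omega>)) \<le> Hc P (W k) (\<lambda>\<omega>. (msgs_on W T \<omega>, Queries t \<omega>))"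
    using T k by (intro Hc_cond_antimono) (auto simp: determines_def restrict_eq_restrict_iff)
  moreover have "H P (\<lambda>\<omega>. (W k \<omega>, msgs_on W ?B \<omega>, Queries t \<omega>)) = H P (\<lambda>\<omega>. (msgs K W \<omega>, Queries t \<omega>))"
    using k by (intro H_eq_if_determines) (auto simp: determines_def restrict_eq_restrict_iff msgs_eq_iff)
  moreover have "MI P (msgs K W) (Queries t) = 0"
    using t by (rule MI_msgs_queries)
  moreover note H_msgs_split[OF k(1)] H_pair_le_add[of P "msgs_on W ?B" "Queries t"]
  ultimately show ?thesis
    by (simp add: Hc_eq MI_eq)
qed

lemma Hc_answer_privacy:
  assumes s: "s < S" and k: "k < K" "k' < K" and T: "T \<subseteq> {..<K}"
  shows "Hc P (Ans k' s) (\<lambda>\<omega>. (msgs_on W T \<omega>, Q k' s \<omega>)) = Hc P (Ans k s) (\<lambda>\<omega>. (msgs_on W T \<omega>, Q k s \<omega>))"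
proof -
  define V where "V t = (\<lambda>\<omega>. (Q t s \<omega>, Ans t s \<omega>, msgs K W \<omega>))" for t
  have "\<forall>t<K. map_pmf (V 0) P = map_pmf (V t) P"
    using scheme s unfolding private_scheme_def V_def by blast
  then have "map_pmf (V k') P = map_pmf (V k) P"
    using k by metis
  moreover have "msgs_on W T \<omega> = restrict (\<lambda>j. msgs K W \<omega> ! j) T" for \<omega>
    using T by (auto simp: msgs_def intro!: restrict_ext)
  ultimately show ?thesis
    using Hc_map_pmf_cong[of "V k'" P "V k" "\<lambda>(q, a, m). a" "\<lambda>(q, a, m). (restrict (\<lambda>j. m ! j) T, q)"]
    unfolding V_def by simp
qed

lemma Hc_answers_other_index_le:
  assumes k: "k < K" "k' < K" and T: "T \<subseteq> {..<K}"
  shows "Hc P (Answers k') (\<lambda>\<omega>. (msgs_on W T \<omega>, Queries k' \<omega>))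
    \<le> real S * Hc P (Answers k) (\<lambda>\<omega>. (msgs_on W T \<omega>, Queries k \<omega>))"
proof -
  have "Hc P (Ans k' s) (\<lambda>\<omega>. (msgs_on W T \<omega>, Queries k' \<omega>))
      \<le> Hc P (Answers k) (\<lambda>\<omega>. (msgs_on W T \<omega>, Queries k \<omega>))" if s: "s < S" for s
  proof -
    have "Hc P (Ans k' s) (\<lambda>\<omega>. (msgs_on W T \<omega>, Queries k' \<omega>))
        \<le> Hc P (Ans k' s) (\<lambda>\<omega>. (msgs_on W T \<omega>, Q k' s \<omega>))"
    proof (rule Hc_cond_antimono)
      show "determines P (\<lambda>\<omega>. (msgs_on W T \<omega>, Queries k' \<omega>)) (\<lambda>\<omega>. (msgs_on W T \<omega>, Q k' s \<omega>))"
        using determines_query[OF s, of k'] unfolding determines_def by blast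
    qed
    also have "\<dots> = Hc P (Ans k s) (\<lambda>\<omega>. (msgs_on W T \<omega>, Q k s \<omega>))"
      using s k T by (rule Hc_answer_privacy)
    also have "\<dots> \<le> Hc P (Ans k s) (\<lambda>\<omega>. (msgs_on W T \<omega>, Queries k \<omega>))"
      by (rule Hc_le_Hc_independent_refinement[OF MI_msgs_queries[OF k(1)] determines_msgs_on[OF T]
            determines_query[OF s] determines_answer_msgs_query])
    also have "\<dots> \<le> Hc P (Answers k) (\<lambda>\<omega>. (msgs_on W T \<omega>, Queries k \<omega>))"
      by (rule Hc_le_if_determines[OF determines_answer[OF s]])
    finally show ?thesis .
  qed
  note each = this
  have "Hc P (Answers k') (\<lambda>\<omega>. (msgs_on W T \<omega>, Queries k' \<omega>))
      \<le> (\<Sum>s<S. Hc P (Ans k' s) (\<lambda>\<omega>. (msgs_on W T \<omega>, Queries k' \<omega>)))"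
    unfolding answers_def by (rule Hc_list_le_sum)
  also have "\<dots> \<le> (\<Sum>s<S. Hc P (Answers k) (\<lambda>\<omega>. (msgs_on W T \<omega>, Queries k \<omega>)))"
    using each by (intro sum_mono) simp
  also have "\<dots> = real S * Hc P (Answers k) (\<lambda>\<omega>. (msgs_on W T \<omega>, Queries k \<omega>))"
    by simp
  finally show ?thesis .
qed

lemma Hc_answers_decode_message:
  assumes T: "T \<subseteq> {..<K}" and k: "k < K" "k \<notin> T"
  shows "real L + Hc P (Answers k) (\<lambda>\<omega>. (msgs_on W (insert k T) \<omega>, Queries k \<omega>))
    \<le> Hc P (Answers k) (\<lambda>\<omega>. (msgs_on W T \<omega>, Queries k \<omega>))"
proof -
  let ?Z = "\<lambda>\<omega>. (msgs_on W T \<omega>, Queries k \<omega>)"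
  have "W k \<omega> = dec k (Queries k \<omega>) (Answers k \<omega>)" if "\<omega> \<in> set_pmf P" for \<omega>
    using scheme k(1) that unfolding private_scheme_def by auto
  then have "determines P (\<lambda>\<omega>. (Answers k \<omega>, ?Z \<omega>)) (W k)"
    unfolding determines_def by auto
  then have "Hc P (Answers k) ?Z = Hc P (W k) ?Z + Hc P (Answers k) (\<lambda>\<omega>. (W k \<omega>, ?Z \<omega>))"
    by (rule Hc_chain_determined)
  also have "Hc P (Answers k) (\<lambda>\<omega>. (W k \<omega>, ?Z \<omega>))
      = Hc P (Answers k) (\<lambda>\<omega>. (msgs_on W (insert k T) \<omega>, Queries k \<omega>))"
    by (rule Hc_cond_cong) (auto simp: determines_def restrict_eq_restrict_iff)
  finally show ?thesis
    using L_le_Hc_message[OF T k k(1)] by linarith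
qed

lemma Hc_answers_lower_bound:
  assumes S: "0 < S" and "T \<subseteq> {..<K}" and "k < K" and "k \<notin> T"
  shows "real L * (\<Sum>i<K - card T. (1 / real S) ^ i)
    \<le> Hc P (Answers k) (\<lambda>\<omega>. (msgs_on W T \<omega>, Queries k \<omega>))"
  using assms(2-4)
proof (induction "K - card T" arbitrary: T k)
  case 0
  then have "K - card T = 0"
    by simp
  then show ?case
    using Hc_nonneg by simp
next
  case (Suc n)
  let ?T' = "insert k T"
  have T': "?T' \<subseteq> {..<K}" and fin: "finite ?T'"
    using Suc.prems finite_subset by auto
  have n: "n = K - card ?T'"
    using Suc.hyps(2) Suc.prems fin by simp
  have "real L * (\<Sum>i<n. (1 / real S) ^ i)
      \<le> real S * Hc P (Answers k) (\<lambda>\<omega>. (msgs_on W ?T' \<omega>, Queries k \<omega>))"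
  proof (cases "n = 0")
    case True
    then show ?thesis
      by (simp add: Hc_nonneg)
  next
    case False
    have "\<not> {..<K} \<subseteq> ?T'"
      using card_mono[OF fin, of "{..<K}"] n False by auto
    then obtain k' where k': "k' < K" "k' \<notin> ?T'"
      by auto
    have "real L * (\<Sum>i<n. (1 / real S) ^ i) \<le> Hc P (Answers k') (\<lambda>\<omega>. (msgs_on W ?T' \<omega>, Queries k' \<omega>))"
      using Suc.hyps(1)[OF n T' k'] n by simp
    also have "\<dots> \<le> real S * Hc P (Answers k) (\<lambda>\<omega>. (msgs_on W ?T' \<omega>, Queries k \<omega>))"
      using Suc.prems(2) k'(1) T' by (rule Hc_answers_other_index_le)
    finally show ?thesis .
  qed
  note step = this
  have "(\<Sum>i<Suc n. (1 / real S) ^ i) = 1 + (\<Sum>i<n. (1 / real S) ^ i) / real S"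
    by (subst sum.lessThan_Suc_shift) (simp add: sum_divide_distrib)
  then have "real L * (\<Sum>i<Suc n. (1 / real S) ^ i) = real L + real L * (\<Sum>i<n. (1 / real S) ^ i) / real S"
    by (simp add: algebra_simps)
  also have "\<dots> \<le> real L + Hc P (Answers k) (\<lambda>\<omega>. (msgs_on W ?T' \<omega>, Queries k \<omega>))"
    using step S by (simp add: pos_divide_le_eq mult.commute)
  also have "\<dots> \<le> Hc P (Answers k) (\<lambda>\<omega>. (msgs_on W T \<omega>, Queries k \<omega>))"
    using Suc.prems by (rule Hc_answers_decode_message)
  finally show ?case
    using Suc.hyps(2) by simp
qed

lemma rate_le:
  assumes S: "0 < S" and \<theta>: "\<theta> < K"
  shows "rate P S K L W Q ans \<theta> \<le> 1 / (\<Sum>i<K. (1 / real S) ^ i)"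
proof -
  let ?\<sigma> = "\<Sum>i<K. (1 / real S) ^ i" and ?D = "\<Sum>s<S. Hc P (Ans \<theta> s) (Queries \<theta>)"
  have "real L * ?\<sigma> \<le> Hc P (Answers \<theta>) (\<lambda>\<omega>. (msgs_on W {} \<omega>, Queries \<theta> \<omega>))"
    using Hc_answers_lower_bound[OF S empty_subsetI \<theta>] by simp
  also have "\<dots> = Hc P (Answers \<theta>) (Queries \<theta>)"
    by (rule Hc_cond_cong) (auto simp: determines_def)
  also have "\<dots> \<le> ?D"
    unfolding answers_def by (rule Hc_list_le_sum)
  finally have LD: "real L * ?\<sigma> \<le> ?D" .
  obtain m where K: "K = Suc m"
    using \<theta> less_imp_Suc_add by blast
  have \<sigma>: "1 \<le> ?\<sigma>"
    unfolding K sum.lessThan_Suc_shift by (simp add: sum_nonneg)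
  show ?thesis
  proof (cases "L = 0")
    case True
    then show ?thesis
      using \<sigma> by (simp add: rate_def)
  next
    case False
    then have "0 < real L * ?\<sigma>"
      using \<sigma> by simp
    then have "0 < ?D"
      using LD by linarith
    then show ?thesis
      using LD \<sigma> by (simp add: rate_def field_simps)
  qed
qed

end

section \<open>Achievability\<close>

lemma take_drop_concat_eq_nth:
  assumes "\<forall>x\<in>set xs. length x = L" and "t < length xs"
  shows "take L (drop (t * L) (concat xs)) = xs ! t"
  using assms
proof (induction xs arbitrary: t)
  case Nil
  then show ?case by simp
next
  case (Cons x xs)
  then show ?case
    by (cases t) simp_all
qed

lemma private_scheme_download_all:
  fixes P :: "'o::finite pmf"
  assumes S: "0 < S" and messages: "messages_ok P K L W"
  shows "\<exists>(Q :: nat \<Rightarrow> nat \<Rightarrow> 'o \<Rightarrow> 'q) ans dec. private_scheme P S K W Q ans dec"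
proof -
  define Q :: "nat \<Rightarrow> nat \<Rightarrow> 'o \<Rightarrow> 'q" where "Q = (\<lambda>t s \<omega>. undefined)"
  define ans :: "nat \<Rightarrow> 'q \<Rightarrow> bool list list \<Rightarrow> bool list" where "ans = (\<lambda>s q m. concat m)"
  define dec :: "nat \<Rightarrow> 'q list \<Rightarrow> bool list list \<Rightarrow> bool list" where
    "dec = (\<lambda>t q a. take L (drop (t * L) (hd a)))"
  have "MI P (queries S Q t) (msgs K W) = 0" for t
    using MI_const[of P "map (\<lambda>s. undefined) [0..<S]" "msgs K W"] by (simp add: queries_def Q_def)
  moreover have "dec t (queries S Q t \<omega>) (answers S K W Q ans t \<omega>) = W t \<omega>" if "t < K" for t \<omega>
  proof -
    have "hd (answers S K W Q ans t \<omega>) = concat (map (\<lambda>k. W k \<omega>) [0..<K])"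
      using S by (simp add: answers_def answer_def ans_def msgs_def upt_conv_Cons)
    then show ?thesis
      using take_drop_concat_eq_nth[of "map (\<lambda>k. W k \<omega>) [0..<K]" L t] messages that
      by (simp add: dec_def messages_ok_def)
  qed
  ultimately have "private_scheme P S K W Q ans dec"
    unfolding private_scheme_def by (simp add: Q_def answer_def ans_def)
  then show ?thesis
    by blast
qed

theorem lemma1:
  fixes P :: "'o::finite pmf"
    and N U S K L \<theta> :: nat
    and W :: "nat \<Rightarrow> 'o \<Rightarrow> bool list"
  assumes "N \<ge> 1" and "U \<ge> 1" and "S = N + U - 1"
    and "messages_ok P K L W"
    and "\<theta> < K"
  shows "(\<exists>(Q :: nat \<Rightarrow> nat \<Rightarrow> 'o \<Rightarrow> 'q) ans dec. private_scheme P S K W Q ans dec) \<and>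
         (\<forall>(Q :: nat \<Rightarrow> nat \<Rightarrow> 'o \<Rightarrow> 'q) ans dec. private_scheme P S K W Q ans dec \<longrightarrow>
            rate P S K L W Q ans \<theta> \<le> 1 / (\<Sum>i<K. (1 / real S) ^ i))"
proof -
  have S: "0 < S"
    using assms(1-3) by simp
  have "\<exists>(Q :: nat \<Rightarrow> nat \<Rightarrow> 'o \<Rightarrow> 'q) ans dec. private_scheme P S K W Q ans dec"
    using S assms(4) by (rule private_scheme_download_all)
  moreover have "\<forall>(Q :: nat \<Rightarrow> nat \<Rightarrow> 'o \<Rightarrow> 'q) ans dec. private_scheme P S K W Q ans dec \<longrightarrow>
      rate P S K L W Q ans \<theta> \<le> 1 / (\<Sum>i<K. (1 / real S) ^ i)"
    using rate_le[OF assms(4) _ S assms(5)] by blast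
  ultimately show ?thesis ..
qed

end
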